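(* For every $m\geq 1$ and every $\alpha=(\alpha_0,\dots,\alpha_{m-1})\in\mathbb{N}^m$, the function $n\mapsto u_\alpha(n)$ has a rational generating function; that is, there exist polynomials $P(x),Q(x)\in\mathbb{C}[x]$ with $Q(0)\neq 0$ such that $\sum_{n\geq 0}u_\alpha(n)x^n=P(x)/Q(x)$ as formal power series (equivalently, $u_\alpha(n)$ satisfies a linear recurrence with constant coefficients for all sufficiently large $n$).
   Context: $\mathbb{N}=\{0,1,2,\dots\}$. Stern's triangle is the array of integers $a(n,k)$, $n\geq 0$, $k\in\mathbb{Z}$, defined as follows. Row $n$ consists of $a(n,0),\dots,a(n,N_n)$ with $N_n=2^{n+1}-2$, and $a(n,k)=0$ if $k<0$ or $k>N_n$. Row $0$ is $a(0,0)=1$. Given row $n$ with $N=N_n$: $a(n+1,0)=1$, $a(n+1,2j+1)=a(n,j)$ for $0\leq j\leq N$, $a(n+1,2j+2)=a(n,j)+a(n,j+1)$ for $0\leq j\leq N-1$, and $a(n+1,2N+2)=1$. (Equivalently, $\sum_k a(n,k)x^k=\prod_{i=0}^{n-1}(1+x^{2^i}+x^{2\cdot 2^i})$.) For $\alpha=(\alpha_0,\dots,\alpha_{m-1})\in\mathbb{N}^m$ define $$u_\alpha(n)=\sum_{k\geq 0} a(n,k)^{\alpha_0}a(n,k+1)^{\alpha_1}\cdots a(n,k+m-1)^{\alpha_{m-1}}.$$ *)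

theory Defs
  imports "HOL-Computational_Algebra.Computational_Algebra"
begin

definition stern_N :: "nat \<Rightarrow> int" where
  "stern_N n = 2 ^ (n + 1) - 2"

fun stern_a :: "nat \<Rightarrow> int \<Rightarrow> nat" where
  "stern_a 0 k = (if k = 0 then 1 else 0)"
| "stern_a (Suc n) k =
     (if k < 0 \<or> k > stern_N (Suc n) then 0
      else if k = 0 then 1
      else if k = 2 * stern_N n + 2 then 1
      else if odd k then stern_a n ((k - 1) div 2)
      else stern_a n ((k - 2) div 2) + stern_a n ((k - 2) div 2 + 1))"

text \<open>u_alpha(n) = sum over k of prod_i a(n,k+i)^(alpha_i), alpha a list of length m.
  The sum is taken over the support 0..N_n of row n (all other terms vanish as soon as
  alpha is not the zero vector).\<close>
definition stern_u :: "nat list \<Rightarrow> nat \<Rightarrow> nat" where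
  "stern_u \<alpha> n = (\<Sum>k\<in>{0..nat (stern_N n)}.
       \<Prod>i<length \<alpha>. stern_a n (int k + int i) ^ (\<alpha> ! i))"

end

theory Submission
  imports Defs
begin

text \<open>For a list \<open>l\<close> of offsets put \<open>W_l(n) = \<Sum>_k \<Prod>_(q\<in>l) a(n, k + q)\<close>.
  The doubling rule of the triangle writes \<open>a(n+1, 2j + e + q)\<close> as a sum of one or two entries
  \<open>a(n, j + p)\<close> with \<open>p \<in> {\<lfloor>(e+q)/2\<rfloor> - 1, \<lfloor>(e+q)/2\<rfloor>}\<close>; expanding the product gives
  \<open>W_l(n+1)\<close> as a sum of \<open>W_l'(n)\<close> over offset lists \<open>l'\<close> of the same length whose entries stay
  in \<open>[-1, M]\<close> once \<open>M \<ge> 1\<close>. Hence the finitely many generating functions of the \<open>W_l\<close> satisfy a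
  linear system \<open>g = c + x A g\<close> with constant coefficients, and eliminating one unknown at a time
  shows that they are rational. Finally \<open>u_\<alpha> = W_l\<close> for the offsets \<open>i\<close> repeated \<open>\<alpha>_i\<close> times,
  up to a geometric correction when \<open>\<alpha> = 0\<close>.\<close>

definition rational_fps :: "'a::field fps set" where
  "rational_fps = {f. \<exists>P Q. poly Q 0 \<noteq> 0 \<and> f = fps_of_poly P / fps_of_poly Q}"

lemma rational_fps_iff:
  "f \<in> rational_fps \<longleftrightarrow> (\<exists>P Q. poly Q 0 \<noteq> 0 \<and> f = fps_of_poly P * inverse (fps_of_poly Q))"
  unfolding rational_fps_def mem_Collect_eq
  by (intro ex_cong1 allI conj_cong refl) (simp add: fps_divide_unit poly_0_coeff_0)

lemma rational_fpsI:
  "poly Q 0 \<noteq> 0 \<Longrightarrow> f = fps_of_poly P * inverse (fps_of_poly Q) \<Longrightarrow> f \<in> rational_fps"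
  unfolding rational_fps_iff by blast

lemma rational_fpsE:
  assumes "f \<in> rational_fps"
  obtains P Q where "poly Q 0 \<noteq> 0" "f = fps_of_poly P * inverse (fps_of_poly Q)"
  using assms unfolding rational_fps_iff by blast

lemma rational_fps_of_poly: "fps_of_poly P \<in> rational_fps"
  by (rule rational_fpsI[of 1]) auto

lemma rational_fps_const: "fps_const c \<in> rational_fps"
  using rational_fps_of_poly[of "[:c:]"] by (simp add: fps_of_poly_const)

lemma rational_fps_X: "fps_X \<in> rational_fps"
  using rational_fps_of_poly[of "[:0, 1:]"] by simp

lemma rational_fps_add:
  assumes "f \<in> rational_fps" "g \<in> rational_fps"
  shows "f + g \<in> rational_fps"
proof -
  obtain P Q where Q: "poly Q 0 \<noteq> 0" and f: "f = fps_of_poly P * inverse (fps_of_poly Q)"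
    using assms(1) by (rule rational_fpsE)
  obtain P' Q' where Q': "poly Q' 0 \<noteq> 0" and g: "g = fps_of_poly P' * inverse (fps_of_poly Q')"
    using assms(2) by (rule rational_fpsE)
  have "inverse (fps_of_poly Q) * fps_of_poly Q = 1" "inverse (fps_of_poly Q') * fps_of_poly Q' = 1"
    using Q Q' by (auto intro!: inverse_mult_eq_1 simp: poly_0_coeff_0)
  then have "f + g = fps_of_poly (P * Q' + P' * Q) * inverse (fps_of_poly (Q * Q'))"
    unfolding f g by (simp add: fps_of_poly_add fps_of_poly_mult fps_inverse_mult algebra_simps)
  then show ?thesis by (rule rational_fpsI[rotated]) (simp add: Q Q')
qed

lemma rational_fps_mult:
  assumes "f \<in> rational_fps" "g \<in> rational_fps"
  shows "f * g \<in> rational_fps"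
proof -
  obtain P Q where Q: "poly Q 0 \<noteq> 0" and f: "f = fps_of_poly P * inverse (fps_of_poly Q)"
    using assms(1) by (rule rational_fpsE)
  obtain P' Q' where Q': "poly Q' 0 \<noteq> 0" and g: "g = fps_of_poly P' * inverse (fps_of_poly Q')"
    using assms(2) by (rule rational_fpsE)
  have "f * g = fps_of_poly (P * P') * inverse (fps_of_poly (Q * Q'))"
    unfolding f g by (simp add: fps_of_poly_mult fps_inverse_mult algebra_simps)
  then show ?thesis by (rule rational_fpsI[rotated]) (simp add: Q Q')
qed

lemma rational_fps_uminus: "f \<in> rational_fps \<Longrightarrow> - f \<in> rational_fps"
  using rational_fps_mult[OF rational_fps_const[of "-1"]] by (simp add: fps_const_neg[symmetric])

lemma rational_fps_diff: "f \<in> rational_fps \<Longrightarrow> g \<in> rational_fps \<Longrightarrow> f - g \<in> rational_fps"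
  unfolding diff_conv_add_uminus by (intro rational_fps_add rational_fps_uminus)

lemma rational_fps_inverse:
  assumes "f \<in> rational_fps" "f $ 0 \<noteq> 0"
  shows "inverse f \<in> rational_fps"
proof -
  obtain P Q where Q: "poly Q 0 \<noteq> 0" and f: "f = fps_of_poly P * inverse (fps_of_poly Q)"
    using assms(1) by (rule rational_fpsE)
  have "poly P 0 \<noteq> 0" using assms(2) Q unfolding f by (simp add: poly_0_coeff_0)
  moreover have "inverse f = fps_of_poly Q * inverse (fps_of_poly P)"
    using Q unfolding f by (simp add: fps_inverse_mult poly_0_coeff_0)
  ultimately show ?thesis by (rule rational_fpsI)
qed

lemma rational_fps_sum: "(\<And>i. i \<in> A \<Longrightarrow> f i \<in> rational_fps) \<Longrightarrow> sum f A \<in> rational_fps"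
  by (induction A rule: infinite_finite_induct)
     (auto intro: rational_fps_add simp: rational_fps_of_poly[of 0, simplified])

lemma rational_fps_geometric: "Abs_fps (\<lambda>_. 1) \<in> rational_fps"
proof -
  have "Abs_fps (\<lambda>_. 1 :: 'a) = inverse (1 - fps_X)"
    using fps_inverse_idempotent[of "Abs_fps (\<lambda>_. 1 :: 'a)"] by (simp add: fps_inverse_gp')
  also have "\<dots> \<in> rational_fps"
    by (intro rational_fps_inverse rational_fps_diff rational_fps_X rational_fps_of_poly[of 1, simplified]) simp
  finally show ?thesis .
qed

lemma fps_linear_eq_solve:
  fixes a b g :: "'a::field fps"
  assumes "g = b + fps_X * a * g"
  shows "g = inverse (1 - fps_X * a) * b"
proof -
  have "(1 - fps_X * a) * g = b"
    using assms by (simp add: algebra_simps)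
  moreover have "inverse (1 - fps_X * a) * (1 - fps_X * a) = 1"
    by (rule inverse_mult_eq_1) simp
  ultimately show ?thesis
    by (metis mult.assoc mult_1)
qed

lemma rational_fps_linear_system:
  fixes g c :: "'i \<Rightarrow> 'a::field fps" and a :: "'i \<Rightarrow> 'i \<Rightarrow> 'a fps"
  assumes "finite S"
    and "\<And>i. i \<in> S \<Longrightarrow> c i \<in> rational_fps"
    and "\<And>i j. i \<in> S \<Longrightarrow> j \<in> S \<Longrightarrow> a i j \<in> rational_fps"
    and "\<And>i. i \<in> S \<Longrightarrow> g i = c i + (\<Sum>j\<in>S. fps_X * a i j * g j)"
    and "i \<in> S"
  shows "g i \<in> rational_fps"
  using assms
proof (induction S arbitrary: c a i rule: finite_induct)
  case empty
  then show ?case by simp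
next
  case (insert x S)
  have eq: "g i = c i + fps_X * a i x * g x + (\<Sum>j\<in>S. fps_X * a i j * g j)"
    if "i \<in> insert x S" for i
    using insert.prems(3)[OF that] insert.hyps by (simp add: add.assoc)
  define b where "b = c x + (\<Sum>j\<in>S. fps_X * a x j * g j)"
  define d where "d = inverse (1 - fps_X * a x x)"
  have gx: "g x = d * b"
    unfolding d_def
    by (rule fps_linear_eq_solve, rule trans[OF eq[of x]]) (simp_all add: b_def add_ac)
  have d: "d \<in> rational_fps"
    unfolding d_def using insert.prems(2)
    by (intro rational_fps_inverse rational_fps_diff rational_fps_mult rational_fps_X
        rational_fps_of_poly[of 1, simplified]) simp_all
  \<comment> \<open>Substituting \<open>g x = d * b\<close> into the other equations eliminates the unknown \<open>g x\<close>.\<close>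
  define c' where "c' i = c i + fps_X * a i x * d * c x" for i
  define a' where "a' i j = a i j + a i x * d * fps_X * a x j" for i j
  have g_S: "g j \<in> rational_fps" if "j \<in> S" for j
  proof (rule insert.IH[of c' a'])
    show "c' i \<in> rational_fps" if "i \<in> S" for i
      unfolding c'_def using that insert.prems(1,2) d
      by (intro rational_fps_add rational_fps_mult rational_fps_X) auto
    show "a' i j \<in> rational_fps" if "i \<in> S" "j \<in> S" for i j
      unfolding a'_def using that insert.prems(2) d
      by (intro rational_fps_add rational_fps_mult rational_fps_X) auto
    show "g i = c' i + (\<Sum>j\<in>S. fps_X * a' i j * g j)" if "i \<in> S" for i
    proof -
      have "g i = c i + fps_X * a i x * (d * b) + (\<Sum>j\<in>S. fps_X * a i j * g j)"
        using eq[of i] that gx by simp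
      also have "\<dots> = c i + fps_X * a i x * d * c x
          + (\<Sum>j\<in>S. fps_X * a i x * d * (fps_X * a x j * g j)) + (\<Sum>j\<in>S. fps_X * a i j * g j)"
        unfolding b_def by (simp add: algebra_simps sum_distrib_left)
      also have "\<dots> = c' i + (\<Sum>j\<in>S. fps_X * a' i j * g j)"
        unfolding c'_def a'_def by (simp add: algebra_simps sum.distrib)
      finally show ?thesis .
    qed
  qed (fact that)
  have "g x \<in> rational_fps"
    unfolding gx b_def using insert.prems(1,2) d g_S
    by (intro rational_fps_mult rational_fps_add rational_fps_sum rational_fps_X) auto
  with g_S insert.prems(4) show ?case by blast
qed

lemma Abs_fps_conv_shift:
  fixes f :: "nat \<Rightarrow> 'a::comm_ring_1"
  shows "Abs_fps f = fps_const (f 0) + fps_X * Abs_fps (\<lambda>n. f (Suc n))"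
proof (rule fps_ext)
  show "Abs_fps f $ n = (fps_const (f 0) + fps_X * Abs_fps (\<lambda>n. f (Suc n))) $ n" for n
    by (cases n) simp_all
qed

lemma sum_list_concat: "sum_list (concat xss) = sum_list (map sum_list xss)"
  by (induction xss) simp_all

lemma prod_list_concat: "prod_list (concat xss) = prod_list (map prod_list xss)"
  by (induction xss) simp_all

lemma prod_list_sum_list_product_lists:
  fixes f :: "'a \<Rightarrow> 'b::comm_semiring_1"
  shows "prod_list (map (\<lambda>xs. sum_list (map f xs)) xss) =
    sum_list (map (\<lambda>ys. prod_list (map f ys)) (product_lists xss))"
  by (induction xss)
     (simp_all add: sum_list_concat map_concat o_def sum_list_const_mult sum_list_mult_const)

lemma sum_sum_list_swap:
  fixes h :: "'a \<Rightarrow> 'b \<Rightarrow> 'c::comm_monoid_add"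
  shows "(\<Sum>j\<in>A. \<Sum>y\<leftarrow>L. h j y) = (\<Sum>y\<leftarrow>L. \<Sum>j\<in>A. h j y)"
  by (induction L) (simp_all add: sum.distrib)

lemma sum_lessThan_double:
  fixes f :: "nat \<Rightarrow> 'a::comm_monoid_add"
  shows "(\<Sum>k<2 * N. f k) = (\<Sum>j<N. f (2 * j) + f (2 * j + 1))"
  by (induction N) (simp_all add: add.assoc)

lemma stern_N_Suc: "stern_N (Suc n) = 2 * stern_N n + 2"
  by (simp add: stern_N_def)

lemma stern_N_nonneg: "stern_N n \<ge> 0"
  by (simp add: stern_N_def)

lemma nat_stern_N: "nat (stern_N n) + 2 = 2 ^ (n + 1)"
proof -
  have "stern_N n + 2 = 2 ^ (n + 1)" by (simp add: stern_N_def)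
  then have "int (nat (stern_N n) + 2) = int (2 ^ (n + 1))" using stern_N_nonneg[of n] by simp
  then show ?thesis by (simp only: of_nat_eq_iff)
qed

lemma stern_a_outside: "k < 0 \<or> k > stern_N n \<Longrightarrow> stern_a n k = 0"
  by (cases n) (auto simp: stern_N_def)

lemma stern_a_first: "stern_a n 0 = 1"
proof (cases n)
  case (Suc m) with stern_N_nonneg[of m] show ?thesis by (auto simp: stern_N_Suc)
qed simp

lemma stern_a_last: "stern_a n (stern_N n) = 1"
proof (cases n)
  case (Suc m) with stern_N_nonneg[of m] show ?thesis by (auto simp: stern_N_Suc)
qed (simp add: stern_N_def)

lemma stern_a_Suc_odd: "stern_a (Suc n) (2 * j + 1) = stern_a n j"
proof (cases "j < 0 \<or> j > stern_N n")
  case True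
  then show ?thesis using stern_a_outside[of j n] stern_N_Suc[of n] by auto
next
  case False
  then show ?thesis using stern_N_Suc[of n] by auto
qed

lemma stern_a_Suc_even: "stern_a (Suc n) (2 * j) = stern_a n (j - 1) + stern_a n j"
proof -
  consider "j < 0" | "j = 0" | "j = stern_N n + 1" | "j > stern_N n + 1" | "0 < j" "j \<le> stern_N n"
    by linarith
  then show ?thesis
  proof cases
    case 2
    then show ?thesis using stern_a_outside[of "-1" n] stern_a_first[of n] stern_N_nonneg[of "Suc n"] by simp
  next
    case 3
    then show ?thesis
      using stern_a_outside[of j n] stern_a_last[of n] stern_N_Suc[of n] stern_N_nonneg[of n] by auto
  next
    case 5
    moreover have "(2 * j - 2) div 2 = j - 1" by simp
    ultimately show ?thesis using stern_N_Suc[of n] by auto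
  qed (use stern_a_outside[of j n] stern_a_outside[of "j - 1" n] stern_N_Suc[of n] in auto)
qed

definition parent_offsets :: "int \<Rightarrow> int \<Rightarrow> int list" where
  "parent_offsets e q =
     (if odd (e + q) then [(e + q - 1) div 2] else [(e + q) div 2 - 1, (e + q) div 2])"

lemma stern_a_Suc_parent_offsets:
  "stern_a (Suc n) (2 * j + e + q) = (\<Sum>p\<leftarrow>parent_offsets e q. stern_a n (j + p))"
proof (cases "odd (e + q)")
  case True
  then obtain t where "e + q = 2 * t + 1" by (rule oddE)
  then have "2 * j + e + q = 2 * (j + t) + 1" "parent_offsets e q = [t]"
    using True by (simp_all add: parent_offsets_def)
  then show ?thesis by (simp only: stern_a_Suc_odd) simp
next
  case False
  then obtain t where "e + q = 2 * t" by (metis evenE)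
  then have "2 * j + e + q = 2 * (j + t)" "parent_offsets e q = [t - 1, t]"
    using False by (simp_all add: parent_offsets_def)
  then show ?thesis by (simp only: stern_a_Suc_even) (simp add: algebra_simps)
qed

text \<open>The window \<open>k < 2^(n+1)\<close> runs one step past the support \<open>0..N_n\<close> of row \<open>n\<close>,
  so that the window of row \<open>n+1\<close> is exactly twice as long.\<close>
definition stern_window_sum :: "int list \<Rightarrow> nat \<Rightarrow> nat" where
  "stern_window_sum l n = (\<Sum>k<2 ^ (n + 1). \<Prod>q\<leftarrow>l. stern_a n (int k + q))"

definition offset_splits :: "int list \<Rightarrow> int list list" where
  "offset_splits l =
     product_lists (map (parent_offsets 0) l) @ product_lists (map (parent_offsets 1) l)"

lemma stern_window_sum_Suc:
  "stern_window_sum l (Suc n) = (\<Sum>l'\<leftarrow>offset_splits l. stern_window_sum l' n)"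
proof -
  define F where "F k = (\<Prod>q\<leftarrow>l. stern_a (Suc n) (int k + q))" for k
  have F: "F (2 * j + e) = (\<Sum>ys\<leftarrow>product_lists (map (parent_offsets (int e)) l).
              \<Prod>p\<leftarrow>ys. stern_a n (int j + p))" for j e
  proof -
    have "F (2 * j + e) = (\<Prod>xs\<leftarrow>map (parent_offsets (int e)) l. \<Sum>p\<leftarrow>xs. stern_a n (int j + p))"
      unfolding F_def using stern_a_Suc_parent_offsets[of n "int j" "int e"]
      by (simp add: o_def algebra_simps)
    then show ?thesis by (simp only: prod_list_sum_list_product_lists)
  qed
  have "stern_window_sum l (Suc n) = (\<Sum>k<2 * 2 ^ (n + 1). F k)"
    unfolding stern_window_sum_def F_def by simp
  also have "\<dots> = (\<Sum>j<2 ^ (n + 1). F (2 * j) + F (2 * j + 1))"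
    by (rule sum_lessThan_double)
  also have "\<dots> = (\<Sum>l'\<leftarrow>offset_splits l. stern_window_sum l' n)"
    unfolding F[of _ 1] F[of _ 0, simplified] offset_splits_def stern_window_sum_def
    by (simp add: sum.distrib sum_sum_list_swap)
  finally show ?thesis .
qed

definition offset_lists :: "nat \<Rightarrow> int \<Rightarrow> int list set" where
  "offset_lists d M = {l. set l \<subseteq> {-1..M} \<and> length l = d}"

lemma finite_offset_lists: "finite (offset_lists d M)"
  unfolding offset_lists_def by (rule finite_lists_length_eq) simp

lemma parent_offsets_bounded:
  "M \<ge> 1 \<Longrightarrow> q \<in> {-1..M} \<Longrightarrow> e \<in> {0, 1} \<Longrightarrow> set (parent_offsets e q) \<subseteq> {-1..M}"
  unfolding parent_offsets_def by auto

lemma offset_splits_closed: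
  assumes "M \<ge> 1" and "l \<in> offset_lists d M"
  shows "set (offset_splits l) \<subseteq> offset_lists d M"
proof
  fix ys assume "ys \<in> set (offset_splits l)"
  then obtain e where e: "e \<in> {0, 1}" and "ys \<in> set (product_lists (map (parent_offsets e) l))"
    unfolding offset_splits_def by auto
  then have len: "length ys = length l"
    and ys: "\<And>i. i < length l \<Longrightarrow> ys ! i \<in> set (parent_offsets e (l ! i))"
    by (auto simp: product_lists_set list_all2_conv_all_nth)
  have "ys ! i \<in> {-1..M}" if "i < length l" for i
  proof -
    have "l ! i \<in> {-1..M}"
      using assms(2) nth_mem[OF that] by (auto simp: offset_lists_def)
    then show ?thesis using ys[OF that] parent_offsets_bounded[OF assms(1) _ e] by blast
  qed
  with len assms(2) show "ys \<in> offset_lists d M"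
    by (auto simp: offset_lists_def in_set_conv_nth)
qed

lemma rational_fps_stern_window_sum:
  assumes "M \<ge> 1" and "l \<in> offset_lists d M"
  shows "Abs_fps (\<lambda>n. of_nat (stern_window_sum l n) :: 'a::field) \<in> rational_fps"
proof -
  define g where "g l = Abs_fps (\<lambda>n. of_nat (stern_window_sum l n) :: 'a)" for l
  define a where "a l l' = fps_const (of_nat (count_list (offset_splits l) l') :: 'a)" for l l'
  have "g l = fps_const (of_nat (stern_window_sum l 0)) +
      (\<Sum>l'\<in>offset_lists d M. fps_X * a l l' * g l')" if "l \<in> offset_lists d M" for l
  proof -
    have "stern_window_sum l (Suc n) =
        (\<Sum>l'\<in>offset_lists d M. count_list (offset_splits l) l' * stern_window_sum l' n)" for n
      unfolding stern_window_sum_Suc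
      by (rule sum_list_map_eq_sum_count2[OF offset_splits_closed[OF assms(1) that] finite_offset_lists])
    then have "Abs_fps (\<lambda>n. of_nat (stern_window_sum l (Suc n)) :: 'a) = (\<Sum>l'\<in>offset_lists d M. a l l' * g l')"
      by (intro fps_ext) (simp add: fps_sum_nth a_def g_def)
    then show ?thesis
      unfolding g_def by (subst Abs_fps_conv_shift) (simp add: sum_distrib_left mult.assoc)
  qed
  then show ?thesis
    using rational_fps_linear_system[OF finite_offset_lists,
        where c = "\<lambda>l. fps_const (of_nat (stern_window_sum l 0))" and a = a and g = g]
      assms(2) by (simp add: rational_fps_const a_def g_def)
qed

definition alpha_offsets :: "nat list \<Rightarrow> int list" where
  "alpha_offsets \<alpha> = concat (map (\<lambda>i. replicate (\<alpha> ! i) (int i)) [0..<length \<alpha>])"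

lemma alpha_offsets_bounded: "set (alpha_offsets \<alpha>) \<subseteq> {0..int (length \<alpha>) - 1}"
  unfolding alpha_offsets_def by auto

lemma prod_alpha_offsets:
  "(\<Prod>i<length \<alpha>. stern_a n (int k + int i) ^ (\<alpha> ! i)) =
   (\<Prod>q\<leftarrow>alpha_offsets \<alpha>. stern_a n (int k + q))"
  unfolding alpha_offsets_def map_concat prod_list_concat
  by (simp add: o_def prod.distinct_set_conv_list[symmetric] atLeast0LessThan)

lemma stern_u_eq_stern_window_sum:
  "stern_u \<alpha> n + (if alpha_offsets \<alpha> = [] then 1 else 0) = stern_window_sum (alpha_offsets \<alpha>) n"
proof -
  define T where "T k = (\<Prod>q\<leftarrow>alpha_offsets \<alpha>. stern_a n (int k + q))" for k
  have "T (Suc (nat (stern_N n))) = 0" if nonempty: "alpha_offsets \<alpha> \<noteq> []"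
  proof -
    obtain q where "q \<in> set (alpha_offsets \<alpha>)"
      using hd_in_set[OF nonempty] by blast
    moreover have "stern_a n (int (Suc (nat (stern_N n))) + q) = 0" if "q \<ge> 0" for q
      using that stern_N_nonneg[of n] by (intro stern_a_outside) simp
    ultimately show ?thesis
      using alpha_offsets_bounded[of \<alpha>] unfolding T_def prod_list_zero_iff by fastforce
  qed
  then have last: "T (Suc (nat (stern_N n))) = (if alpha_offsets \<alpha> = [] then 1 else 0)"
    by (auto simp: T_def)
  have "stern_window_sum (alpha_offsets \<alpha>) n = (\<Sum>k<Suc (Suc (nat (stern_N n))). T k)"
    unfolding stern_window_sum_def T_def using nat_stern_N[of n] by simp
  also have "\<dots> = (\<Sum>k\<in>{0..nat (stern_N n)}. T k) + T (Suc (nat (stern_N n)))"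
    by (simp add: atLeast0AtMost lessThan_Suc_atMost)
  also have "(\<Sum>k\<in>{0..nat (stern_N n)}. T k) = stern_u \<alpha> n"
    unfolding stern_u_def T_def prod_alpha_offsets ..
  finally show ?thesis using last by simp
qed

theorem theorem2p1:
  fixes \<alpha> :: "nat list"
  assumes "length \<alpha> \<ge> 1"
  shows "\<exists>P Q :: complex poly. poly Q 0 \<noteq> 0 \<and>
           Abs_fps (\<lambda>n. of_nat (stern_u \<alpha> n)) = fps_of_poly P / fps_of_poly Q"
proof -
  define l where "l = alpha_offsets \<alpha>"
  define M where "M = max (int (length \<alpha>) - 1) 1"
  have "l \<in> offset_lists (length l) M"
    using alpha_offsets_bounded[of \<alpha>] unfolding offset_lists_def l_def M_def by force
  then have window: "Abs_fps (\<lambda>n. of_nat (stern_window_sum l n) :: complex) \<in> rational_fps"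
    by (rule rational_fps_stern_window_sum[rotated]) (simp add: M_def)
  have correction: "(if l = [] then Abs_fps (\<lambda>_. 1 :: complex) else 0) \<in> rational_fps"
    by (simp add: rational_fps_geometric rational_fps_of_poly[of 0, simplified])
  have "Abs_fps (\<lambda>n. of_nat (stern_u \<alpha> n) :: complex) =
      Abs_fps (\<lambda>n. of_nat (stern_window_sum l n)) - (if l = [] then Abs_fps (\<lambda>_. 1) else 0)"
    unfolding l_def stern_u_eq_stern_window_sum[of \<alpha>, symmetric] by (intro fps_ext) simp
  also have "\<dots> \<in> rational_fps"
    using window correction by (rule rational_fps_diff)
  finally show ?thesis unfolding rational_fps_def by blast
qed

end
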